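(* Let $G$ be a group and let $\varphi,\psi\in\mathrm{Aut}(G)$ with $\varphi\psi=\psi\varphi$. On $G$ define $a*b=\varphi(ab^{-1})b$ and $a\circ b=\psi(ab^{-1})b$. Then for all integers $k,l$, the groupoid $(G,*^k\circ^l)$, with operation $a\,( *^k\circ^l)\,b=(a*^k b)\circ^l b$, is a quandle.
   Context: A quandle is a set with binary operation $*$ satisfying $x*x=x$, unique right division, and $(x*y)*z=(x*z)*(y*z)$; both operations above are quandle operations (generalised Alexander quandles). Powers: $a*^0b=a$; for $n\ge1$, $a*^nb=(a*^{n-1}b)*b$ and $a*^{-n}b$ is obtained by applying $n$ times the right inverse operation $\bar*$ (defined by $a=c*b\iff c=a\,\bar*\,b$); similarly for $\circ$. *)

theory Defs
  imports "HOL-Algebra.Algebra"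
begin

definition quandle :: "'a set \<Rightarrow> ('a \<Rightarrow> 'a \<Rightarrow> 'a) \<Rightarrow> bool" where
  "quandle S op \<longleftrightarrow>
     (\<forall>a\<in>S. \<forall>b\<in>S. op a b \<in> S) \<and>
     (\<forall>a\<in>S. op a a = a) \<and>
     (\<forall>b\<in>S. \<forall>c\<in>S. \<exists>!a. a \<in> S \<and> op a b = c) \<and>
     (\<forall>x\<in>S. \<forall>y\<in>S. \<forall>z\<in>S. op (op x y) z = op (op x z) (op y z))"

definition rdiv :: "'a set \<Rightarrow> ('a \<Rightarrow> 'a \<Rightarrow> 'a) \<Rightarrow> 'a \<Rightarrow> 'a \<Rightarrow> 'a" where
  "rdiv S op c b = (THE a. a \<in> S \<and> op a b = c)"

definition opow :: "'a set \<Rightarrow> ('a \<Rightarrow> 'a \<Rightarrow> 'a) \<Rightarrow> int \<Rightarrow> 'a \<Rightarrow> 'a \<Rightarrow> 'a" where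
  "opow S op n a b =
     (if 0 \<le> n then ((\<lambda>x. op x b) ^^ nat n) a
      else ((\<lambda>x. rdiv S op x b) ^^ nat (- n)) a)"

definition galex_op :: "('g, 'm) monoid_scheme \<Rightarrow> ('g \<Rightarrow> 'g) \<Rightarrow> 'g \<Rightarrow> 'g \<Rightarrow> 'g" where
  "galex_op G f a b = f (a \<otimes>\<^bsub>G\<^esub> inv\<^bsub>G\<^esub> b) \<otimes>\<^bsub>G\<^esub> b"

end

theory Submission
  imports Defs
begin

text \<open>For an automorphism h of G write a *_h b = h(a b^-1) b. Every *_h is a quandle, and
  these operations compose in their first argument: (a *_g b) *_h b = a *_(h g) b. In particular
  right division by *_h is *_(h^-1), so the integer power a *_h^k b equals a *_(h^k) b, and the
  mixed power (a *^k b) \<circ>^l b of the theorem is the quandle operation of the single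
  automorphism \<psi>^l \<phi>^k.\<close>

lemma quandleD:
  assumes "quandle S f"
  shows quandle_closed: "\<forall>a\<in>S. \<forall>b\<in>S. f a b \<in> S"
    and quandle_idem: "\<forall>a\<in>S. f a a = a"
    and quandle_right_div: "\<forall>b\<in>S. \<forall>c\<in>S. \<exists>!a. a \<in> S \<and> f a b = c"
    and quandle_self_distrib: "\<forall>x\<in>S. \<forall>y\<in>S. \<forall>z\<in>S. f (f x y) z = f (f x z) (f y z)"
  using assms unfolding quandle_def by blast+

lemma quandle_cong:
  assumes "quandle S f" and eq: "\<And>a b. a \<in> S \<Longrightarrow> b \<in> S \<Longrightarrow> g a b = f a b"
  shows "quandle S g"
  unfolding quandle_def
proof (intro conjI ballI)
  fix b c assume b: "b \<in> S" and c: "c \<in> S"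
  have "(a \<in> S \<and> g a b = c) \<longleftrightarrow> (a \<in> S \<and> f a b = c)" for a
    using eq b by auto
  then show "\<exists>!a. a \<in> S \<and> g a b = c"
    using quandle_right_div[OF assms(1)] b c by (simp only:)
next
  fix x y z assume xyz: "x \<in> S" "y \<in> S" "z \<in> S"
  then have "g (g x y) z = f (f x y) z"
    using quandle_closed[OF assms(1)] by (simp add: eq)
  also have "\<dots> = f (f x z) (f y z)"
    using quandle_self_distrib[OF assms(1)] xyz by blast
  also have "\<dots> = g (g x z) (g y z)"
    using quandle_closed[OF assms(1)] xyz by (simp add: eq)
  finally show "g (g x y) z = g (g x z) (g y z)" .
qed (use quandle_closed[OF assms(1)] quandle_idem[OF assms(1)] eq in simp_all)

lemma rdiv_eq:
  assumes "quandle S f" "a \<in> S" "b \<in> S"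
  shows "rdiv S f (f a b) b = a"
  unfolding rdiv_def
proof (rule the1_equality)
  show "\<exists>!x. x \<in> S \<and> f x b = f a b"
    using quandle_right_div[OF assms(1)] quandle_closed[OF assms(1)] assms(2,3) by simp
qed (use assms in simp)

lemma auto_imp_iso: "h \<in> auto G \<Longrightarrow> h \<in> iso G G"
  by (auto simp: auto_def iso_def Bij_def)

lemma iso_funpow: "h \<in> iso G G \<Longrightarrow> h ^^ n \<in> iso G G"
  by (induction n) (auto intro: iso_set_trans simp: id_iso)

definition auto_int_pow :: "('g, 'm) monoid_scheme \<Rightarrow> ('g \<Rightarrow> 'g) \<Rightarrow> int \<Rightarrow> 'g \<Rightarrow> 'g" where
  "auto_int_pow G h n =
     (if 0 \<le> n then h ^^ nat n else inv_into (carrier G) h ^^ nat (- n))"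

context group
begin

lemma mult_inv_cancel [simp]:
  "x \<in> carrier G \<Longrightarrow> y \<in> carrier G \<Longrightarrow> x \<otimes> (inv x \<otimes> y) = y"
  by (simp flip: m_assoc)

lemma inv_mult_cancel [simp]:
  "x \<in> carrier G \<Longrightarrow> y \<in> carrier G \<Longrightarrow> inv x \<otimes> (x \<otimes> y) = y"
  by (simp flip: m_assoc)

lemma auto_int_pow_iso: "h \<in> iso G G \<Longrightarrow> auto_int_pow G h n \<in> iso G G"
  by (simp add: auto_int_pow_def iso_funpow iso_set_sym)

lemma galex_op_closed:
  "h \<in> hom G G \<Longrightarrow> a \<in> carrier G \<Longrightarrow> b \<in> carrier G \<Longrightarrow> galex_op G h a b \<in> carrier G"
  by (simp add: galex_op_def hom_in_carrier)

lemma galex_op_galex_op: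
  assumes "g \<in> hom G G" "a \<in> carrier G" "b \<in> carrier G"
  shows "galex_op G h (galex_op G g a b) b = galex_op G (h \<circ> g) a b"
  using assms by (simp add: galex_op_def hom_in_carrier m_assoc)

lemma galex_op_idem: "h \<in> hom G G \<Longrightarrow> a \<in> carrier G \<Longrightarrow> galex_op G h a a = a"
  by (simp add: galex_op_def hom_one)

lemma galex_op_self_distrib:
  assumes h: "h \<in> hom G G" and x: "x \<in> carrier G" and y: "y \<in> carrier G" and z: "z \<in> carrier G"
  shows "galex_op G h (galex_op G h x y) z = galex_op G h (galex_op G h x z) (galex_op G h y z)"
proof -
  interpret group_hom G G h
    using h by (simp add: group_hom_def group_hom_axioms_def is_group)
  have "galex_op G h x z \<otimes> inv (galex_op G h y z) = h (x \<otimes> inv z) \<otimes> h (z \<otimes> inv y)"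
    using x y z by (simp add: galex_op_def inv_mult_group m_assoc)
  also have "\<dots> = h (x \<otimes> inv y)"
    using x y z by (simp add: m_assoc flip: hom_mult)
  finally have "galex_op G h (galex_op G h x z) (galex_op G h y z)
      = h (h (x \<otimes> inv y)) \<otimes> h (y \<otimes> inv z) \<otimes> z"
    using x y z by (simp add: galex_op_def m_assoc)
  also have "\<dots> = galex_op G h (galex_op G h x y) z"
    using x y z by (simp add: galex_op_def m_assoc)
  finally show ?thesis ..
qed

lemma galex_op_inv_into:
  assumes h: "h \<in> iso G G" and b: "b \<in> carrier G" and c: "c \<in> carrier G"
  shows "galex_op G h (galex_op G (inv_into (carrier G) h) c b) b = c"
proof -
  have "bij_betw h (carrier G) (carrier G)"
    using h by (simp add: iso_def)
  then have "h (inv_into (carrier G) h (c \<otimes> inv b)) = c \<otimes> inv b"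
    using b c by (simp add: bij_betw_inv_into_right)
  moreover have "galex_op G h (galex_op G (inv_into (carrier G) h) c b) b
      = galex_op G (h \<circ> inv_into (carrier G) h) c b"
    using iso_imp_homomorphism[OF iso_set_sym[OF h]] c b by (rule galex_op_galex_op)
  ultimately show ?thesis
    using b c by (simp add: galex_op_def m_assoc)
qed

lemma galex_op_right_cancel:
  assumes h: "h \<in> iso G G" and a: "a \<in> carrier G" and a': "a' \<in> carrier G" and b: "b \<in> carrier G"
    and eq: "galex_op G h a b = galex_op G h a' b"
  shows "a = a'"
proof -
  have "h (a \<otimes> inv b) = h (a' \<otimes> inv b)"
    using eq a a' b hom_in_carrier[OF iso_imp_homomorphism[OF h]] by (simp add: galex_op_def)
  then have "a \<otimes> inv b = a' \<otimes> inv b"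
    using h a a' b by (simp add: iso_iff inj_on_def)
  then show ?thesis
    using a a' b by simp
qed

lemma galex_op_quandle:
  assumes h: "h \<in> iso G G"
  shows "quandle (carrier G) (galex_op G h)"
  unfolding quandle_def
proof (intro conjI ballI)
  have hom: "h \<in> hom G G" and hom_inv: "inv_into (carrier G) h \<in> hom G G"
    using h iso_set_sym iso_imp_homomorphism by blast+
  fix b c assume b: "b \<in> carrier G" and c: "c \<in> carrier G"
  show "\<exists>!a. a \<in> carrier G \<and> galex_op G h a b = c"
  proof (rule ex1I)
    show "galex_op G (inv_into (carrier G) h) c b \<in> carrier G
        \<and> galex_op G h (galex_op G (inv_into (carrier G) h) c b) b = c"
      using galex_op_closed[OF hom_inv c b] galex_op_inv_into[OF h b c] by blast
    show "a = galex_op G (inv_into (carrier G) h) c b"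
      if "a \<in> carrier G \<and> galex_op G h a b = c" for a
      using that galex_op_right_cancel[OF h _ galex_op_closed[OF hom_inv c b] b]
        galex_op_inv_into[OF h b c] by simp
  qed
next
  fix x y z assume "x \<in> carrier G" "y \<in> carrier G" "z \<in> carrier G"
  then show "galex_op G h (galex_op G h x y) z = galex_op G h (galex_op G h x z) (galex_op G h y z)"
    using iso_imp_homomorphism[OF h] by (rule galex_op_self_distrib[rotated])
qed (use iso_imp_homomorphism[OF h] in \<open>simp_all add: galex_op_closed galex_op_idem\<close>)

lemma rdiv_galex_op:
  assumes h: "h \<in> iso G G" and b: "b \<in> carrier G" and c: "c \<in> carrier G"
  shows "rdiv (carrier G) (galex_op G h) c b = galex_op G (inv_into (carrier G) h) c b"
proof -
  have "galex_op G (inv_into (carrier G) h) c b \<in> carrier G"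
    using galex_op_closed iso_imp_homomorphism iso_set_sym h b c by blast
  moreover have "rdiv (carrier G) (galex_op G h) c b
      = rdiv (carrier G) (galex_op G h) (galex_op G h (galex_op G (inv_into (carrier G) h) c b) b) b"
    using galex_op_inv_into[OF h b c] by simp
  ultimately show ?thesis
    using rdiv_eq[OF galex_op_quandle[OF h] _ b] by simp
qed

lemma funpow_galex_op:
  assumes g: "g \<in> iso G G" and F: "\<forall>x\<in>carrier G. F x = galex_op G g x b"
    and a: "a \<in> carrier G" and b: "b \<in> carrier G"
  shows "(F ^^ n) a = galex_op G (g ^^ n) a b"
proof (induction n)
  case 0
  show ?case using a b by (simp add: galex_op_def m_assoc)
next
  case (Suc n)
  have hom: "g ^^ n \<in> hom G G"
    using iso_funpow[OF g] by (rule iso_imp_homomorphism)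
  then have "(F ^^ Suc n) a = galex_op G g (galex_op G (g ^^ n) a b) b"
    using Suc F galex_op_closed a b by simp
  also have "\<dots> = galex_op G (g ^^ Suc n) a b"
    using galex_op_galex_op[OF hom a b] by simp
  finally show ?case .
qed

lemma opow_galex_op:
  assumes h: "h \<in> iso G G" and a: "a \<in> carrier G" and b: "b \<in> carrier G"
  shows "opow (carrier G) (galex_op G h) n a b = galex_op G (auto_int_pow G h n) a b"
proof (cases "0 \<le> n")
  case True
  then show ?thesis
    using funpow_galex_op[OF h _ a b] by (simp add: opow_def auto_int_pow_def)
next
  case False
  then show ?thesis
    using funpow_galex_op[OF iso_set_sym[OF h] _ a b] rdiv_galex_op[OF h b]
    by (simp add: opow_def auto_int_pow_def)
qed

end

theorem proposition4p19:
  fixes G :: "('g, 'm) monoid_scheme" and \<phi> \<psi> :: "'g \<Rightarrow> 'g" and k l :: int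
  assumes "group G"
    and "\<phi> \<in> auto G" and "\<psi> \<in> auto G"
    and "\<forall>x\<in>carrier G. \<phi> (\<psi> x) = \<psi> (\<phi> x)"
  shows "quandle (carrier G)
           (\<lambda>a b. opow (carrier G) (galex_op G \<psi>) l
                     (opow (carrier G) (galex_op G \<phi>) k a b) b)"
proof -
  interpret group G by fact
  let ?f = "auto_int_pow G \<phi> k" and ?g = "auto_int_pow G \<psi> l"
  have f: "?f \<in> iso G G" and g: "?g \<in> iso G G"
    using assms(2,3) by (simp_all add: auto_imp_iso auto_int_pow_iso)
  show ?thesis
  proof (rule quandle_cong[OF galex_op_quandle[OF iso_set_trans[OF f g]]])
    fix a b assume a: "a \<in> carrier G" and b: "b \<in> carrier G"
    then show "opow (carrier G) (galex_op G \<psi>) l (opow (carrier G) (galex_op G \<phi>) k a b) b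
        = galex_op G (?g \<circ> ?f) a b"
      using f g assms(2,3)
      by (simp add: auto_imp_iso opow_galex_op galex_op_closed galex_op_galex_op iso_imp_homomorphism)
  qed
qed

end
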